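(* Let $\lambda$ be an infinite cardinal with $\lambda^{\aleph_0}=\lambda$, and let $t_k:\lambda^+\to\lambda^+$ ($k<\omega$) be functions. Then there is a function $F:\lambda^+\to\lambda$ such that whenever $\alpha\neq\beta$ are ordinals below $\lambda^+$ with $F(\alpha)=F(\beta)$, there are no $i,j<\omega$ with $\alpha<t_i(\beta)<t_j(\alpha)$. *)

theory Defs
  imports Main
begin

end

theory Submission
  imports Defs
begin

(* Call d a closure point if every t_k maps the ordinals below d to ordinals below d, and let
   c(x) be the least closure point above x. Closure points are unbounded in lambda^+: starting
   above x, repeatedly pass to a strict upper bound of the t-images of all smaller ordinals;
   as lambda^+ is regular and its proper initial segments have size lambda, the supremum of
   these omega steps is a closure point.
   If alpha < t_i beta < t_j alpha, then c(t_i beta) = c(alpha): c(alpha) is a closure point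
   above t_j alpha > t_i beta, and c(t_i beta) is one above t_i beta > alpha, so each lies below
   the other. It therefore suffices to colour lambda^+ with lambda colours so that distinct
   alpha, beta of the same colour never satisfy c(t_i beta) = c(alpha). Fix an injection of
   lambda^+ into the subsets of lambda. The colour of alpha records the position of alpha below
   c(alpha) and, for each i, a point of lambda at which the sets coding c(t_i alpha) and c(alpha)
   differ, together with whether it lies in the set coding c(alpha); since
   lambda^omega = lambda, this sequence is a single colour. If alpha ~= beta share a colour, then
   c(alpha) ~= c(beta), and c(t_i beta) = c(alpha) would make the point recorded at i separate
   the codes of c(alpha) and c(beta), while the two recorded bits say it lies in both or in
   neither. *)

unbundle cardinal_syntax

lemma card_of_underS_cardSuc:
  assumes "Card_order r"
  shows "|underS (cardSuc r) a| \<le>o r"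
proof (cases "a \<in> Field (cardSuc r)")
  case True
  then have "|underS (cardSuc r) a| <o cardSuc r"
    by (rule card_of_underS[OF cardSuc_Card_order[OF assms]])
  then show ?thesis
    by (simp add: cardSuc_ordLeq_ordLess[OF assms card_of_Card_order])
next
  case False
  then show ?thesis
    using assms by (simp add: underS_empty card_of_empty1)
qed

lemma card_of_Field_cardSuc_ordLeq_Pow:
  assumes "Card_order r"
  shows "|Field (cardSuc r)| \<le>o |Pow (Field r)|"
  using ordIso_ordLeq_trans[OF card_of_Field_ordIso[OF cardSuc_Card_order[OF assms]]
      cardSuc_least[OF assms card_of_Card_order Card_order_Pow[OF assms]]] .

lemma cardSuc_bounded:
  assumes r: "Card_order r" "\<not> finite (Field r)"
    and S: "S \<subseteq> Field (cardSuc r)" "|S| \<le>o r"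
  shows "\<exists>\<delta>\<in>Field (cardSuc r). S \<subseteq> underS (cardSuc r) \<delta>"
proof (rule ccontr)
  let ?W = "cardSuc r"
  interpret W: wo_rel ?W
    using cardSuc_Well_order[OF r(1)] by (rule wo_rel.intro)
  assume unbounded: "\<not> ?thesis"
  have "Field ?W \<subseteq> S \<union> (\<Union>s\<in>S. underS ?W s)"
  proof
    fix \<delta> assume "\<delta> \<in> Field ?W"
    moreover obtain s where "s \<in> S" "s \<notin> underS ?W \<delta>"
      using unbounded \<open>\<delta> \<in> Field ?W\<close> by blast
    ultimately show "\<delta> \<in> S \<union> (\<Union>s\<in>S. underS ?W s)"
      using S(1) W.TOTALS unfolding underS_def by blast
  qed
  moreover have "|\<Union>s\<in>S. underS ?W s| \<le>o r"
    using card_of_UNION_ordLeq_infinite_Field[OF r(2,1) S(2)] card_of_underS_cardSuc[OF r(1)]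
    by blast
  then have "|S \<union> (\<Union>s\<in>S. underS ?W s)| \<le>o r"
    using card_of_Un_ordLeq_infinite_Field[OF r(2) S(2) _ r(1)] by blast
  ultimately have "|Field ?W| \<le>o r"
    using card_of_mono1 ordLeq_transitive by blast
  then have "?W \<le>o r"
    using card_of_Field_ordIso[OF cardSuc_Card_order[OF r(1)]]
      ordIso_ordLeq_trans ordIso_symmetric by blast
  then show False
    using cardSuc_greater[OF r(1)] not_ordLess_ordLeq by blast
qed

lemma card_of_UNIV_nat_ordLeq:
  assumes "Card_order r" "\<not> finite (Field r)"
  shows "|UNIV :: nat set| \<le>o r"
  using ordIso_ordLeq_trans[OF card_of_nat natLeq_ordLeq_cinfinite] assms
  unfolding cinfinite_def by blast

lemma card_of_ordLeq_Card_order: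
  assumes "Card_order r"
  shows "(\<exists>f. inj_on f A \<and> f ` A \<subseteq> Field r) \<longleftrightarrow> |A| \<le>o r"
proof -
  have "|A| \<le>o |Field r| \<longleftrightarrow> |A| \<le>o r"
    using card_of_Field_ordIso[OF assms] ordLeq_ordIso_trans ordIso_symmetric by metis
  then show ?thesis
    using card_of_ordLeq[of A "Field r"] by simp
qed

lemma card_of_Func_nat_Times_bool:
  assumes r: "Card_order r" "\<not> finite (Field r)" and exp: "r ^c natLeq \<le>o r"
  shows "|Func (UNIV :: nat set) (Field r \<times> (UNIV :: bool set))| \<le>o r"
proof -
  have "|UNIV :: bool set| \<le>o r"
    using ctwo_ordLeq_Cinfinite r unfolding ctwo_def cinfinite_def by blast
  then have "|Field r \<times> (UNIV :: bool set)| \<le>o r"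
    by (rule card_of_Times_ordLeq_infinite_Field[OF r(2)
          ordIso_imp_ordLeq[OF card_of_Field_ordIso[OF r(1)]] _ r(1)])
  then have "|Field r \<times> (UNIV :: bool set)| ^c natLeq \<le>o r ^c natLeq"
    by (rule cexp_mono1[OF _ natLeq_Card_order])
  then have "|Field r \<times> (UNIV :: bool set)| ^c natLeq \<le>o r"
    using exp by (rule ordLeq_transitive)
  then show ?thesis
    unfolding cexp_def Field_card_of Field_natLeq .
qed

lemma exists_inj_on_fibres:
  assumes r: "Card_order r" and fibres: "\<And>x. x \<in> A \<Longrightarrow> |{y \<in> A. c y = c x}| \<le>o r"
  shows "\<exists>e. e ` A \<subseteq> Field r \<and> (\<forall>x\<in>A. \<forall>y\<in>A. c x = c y \<and> e x = e y \<longrightarrow> x = y)"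
proof -
  have "\<forall>v\<in>c ` A. \<exists>h. inj_on h {y \<in> A. c y = v} \<and> h ` {y \<in> A. c y = v} \<subseteq> Field r"
    using fibres card_of_ordLeq_Card_order[OF r] by blast
  then obtain h where h: "\<And>v. v \<in> c ` A \<Longrightarrow>
      inj_on (h v) {y \<in> A. c y = v} \<and> h v ` {y \<in> A. c y = v} \<subseteq> Field r"
    by metis
  show ?thesis
  proof (intro exI conjI ballI impI)
    show "(\<lambda>x. h (c x) x) ` A \<subseteq> Field r"
      using h by blast
    fix x y assume "x \<in> A" "y \<in> A" and "c x = c y \<and> h (c x) x = h (c y) y"
    then show "x = y"
      using h[of "c x"] unfolding inj_on_def by auto
  qed
qed

lemma exists_separating_points:
  assumes "\<not> finite (Field r)" and "|D| \<le>o |Pow (Field r)|"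
  shows "\<exists>f sep. \<forall>a\<in>D. \<forall>b\<in>D.
    sep a b \<in> Field r \<and> (a \<noteq> b \<longrightarrow> (sep a b \<in> f a \<longleftrightarrow> sep a b \<notin> f b))"
proof -
  obtain f where f: "inj_on f D" "f ` D \<subseteq> Pow (Field r)"
    using assms(2) unfolding card_of_ordLeq[symmetric] by blast
  have "\<exists>d. d \<in> Field r \<and> (a \<noteq> b \<longrightarrow> (d \<in> f a \<longleftrightarrow> d \<notin> f b))"
    if "a \<in> D" "b \<in> D" for a b
  proof (cases "a = b")
    case True
    then show ?thesis
      using assms(1) by (metis finite.emptyI ex_in_conv)
  next
    case False
    then have "f a \<noteq> f b" "f a \<subseteq> Field r" "f b \<subseteq> Field r"
      using f that unfolding inj_on_def by blast+
    then show ?thesis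
      by (auto simp: set_eq_iff)
  qed
  then show ?thesis
    by metis
qed

lemma exists_coloring_separating_fibres:
  fixes r :: "'b rel" and c :: "'a \<Rightarrow> 'c" and t :: "nat \<Rightarrow> 'a \<Rightarrow> 'a"
  assumes r: "Card_order r" "\<not> finite (Field r)" and exp: "r ^c natLeq \<le>o r"
    and fibres: "\<And>x. x \<in> A \<Longrightarrow> |{y \<in> A. c y = c x}| \<le>o r"
    and image: "|c ` A| \<le>o |Pow (Field r)|"
    and t: "\<And>k. t k ` A \<subseteq> A"
  shows "\<exists>F. F ` A \<subseteq> Field r \<and>
    (\<forall>\<alpha>\<in>A. \<forall>\<beta>\<in>A. \<alpha> \<noteq> \<beta> \<and> F \<alpha> = F \<beta> \<longrightarrow> (\<forall>i. c (t i \<beta>) \<noteq> c \<alpha>))"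
proof -
  obtain e where e: "e ` A \<subseteq> Field r" "\<forall>x\<in>A. \<forall>y\<in>A. c x = c y \<and> e x = e y \<longrightarrow> x = y"
    using exists_inj_on_fibres[where c = c, OF r(1) fibres] by blast
  obtain f sep where sep: "\<forall>a\<in>c ` A. \<forall>b\<in>c ` A.
      sep a b \<in> Field r \<and> (a \<noteq> b \<longrightarrow> (sep a b \<in> f a \<longleftrightarrow> sep a b \<notin> f b))"
    using exists_separating_points[OF r(2) image] by blast
  obtain g where g: "inj_on g (Func (UNIV :: nat set) (Field r \<times> (UNIV :: bool set)))"
      "g ` Func (UNIV :: nat set) (Field r \<times> (UNIV :: bool set)) \<subseteq> Field r"
    using card_of_Func_nat_Times_bool[OF r exp]
    unfolding card_of_ordLeq_Card_order[OF r(1), symmetric] by blast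
  define code where "code x n = (case n of 0 \<Rightarrow> (e x, True)
      | Suc i \<Rightarrow> (sep (c (t i x)) (c x), sep (c (t i x)) (c x) \<in> f (c x)))" for x n
  have code: "code x \<in> Func (UNIV :: nat set) (Field r \<times> (UNIV :: bool set))" if "x \<in> A" for x
  proof -
    have "sep (c (t i x)) (c x) \<in> Field r" for i
      using sep t that by blast
    then show ?thesis
      using e(1) that unfolding code_def Func_def by (auto split: nat.split)
  qed
  show ?thesis
  proof (intro exI conjI ballI impI allI)
    show "(\<lambda>x. g (code x)) ` A \<subseteq> Field r"
      using g(2) code by auto
    fix \<alpha> \<beta> i
    assume \<alpha>: "\<alpha> \<in> A" and \<beta>: "\<beta> \<in> A" and \<alpha>\<beta>: "\<alpha> \<noteq> \<beta> \<and> g (code \<alpha>) = g (code \<beta>)"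
    then have same_code: "code \<alpha> = code \<beta>"
      using inj_onD[OF g(1) _ code[OF \<alpha>] code[OF \<beta>]] by blast
    show "c (t i \<beta>) \<noteq> c \<alpha>"
    proof
      assume "c (t i \<beta>) = c \<alpha>"
      then have "sep (c (t i \<alpha>)) (c \<alpha>) = sep (c \<alpha>) (c \<beta>)"
        and "(sep (c \<alpha>) (c \<beta>) \<in> f (c \<alpha>)) = (sep (c \<alpha>) (c \<beta>) \<in> f (c \<beta>))"
        using fun_cong[OF same_code, of "Suc i"] unfolding code_def by auto
      moreover have "c \<alpha> \<noteq> c \<beta>"
        using e(2) \<alpha> \<beta> \<alpha>\<beta> fun_cong[OF same_code, of 0] unfolding code_def by auto
      ultimately show False
        using sep \<alpha> \<beta> by blast
    qed
  qed
qed

definition closure_point :: "'a rel \<Rightarrow> (nat \<Rightarrow> 'a \<Rightarrow> 'a) \<Rightarrow> 'a \<Rightarrow> bool" where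
  "closure_point W t d \<longleftrightarrow> (\<forall>k. t k ` underS W d \<subseteq> underS W d)"

(* Junk (the minimum of the empty set) unless some closure point lies above x. *)
definition next_closure_point :: "'a rel \<Rightarrow> (nat \<Rightarrow> 'a \<Rightarrow> 'a) \<Rightarrow> 'a \<Rightarrow> 'a" where
  "next_closure_point W t x = wo_rel.minim W {d. closure_point W t d \<and> x \<in> underS W d}"

context wo_rel
begin

lemma underS_trans: "a \<in> underS b \<Longrightarrow> b \<in> underS c \<Longrightarrow> a \<in> underS c"
  using underS_incr[OF TRANS ANTISYM] unfolding underS_def by blast

lemma UN_underS_bounded:
  assumes "b \<in> Field r" "a ` I \<subseteq> underS b"
  shows "\<exists>d. (\<Union>i\<in>I. underS (a i)) = underS d"
proof -
  have "ofilter (\<Union>i\<in>I. underS (a i))"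
    by (rule ofilter_UNION) (rule underS_ofilter)
  then have "(\<exists>d\<in>Field r. (\<Union>i\<in>I. underS (a i)) = underS d) \<or> (\<Union>i\<in>I. underS (a i)) = Field r"
    by (simp only: ofilter_underS_Field)
  moreover have "b \<notin> underS (a i)" if "i \<in> I" for i
    using underS_trans[OF _ subsetD[OF assms(2) imageI[OF that]]] underS_notIn by metis
  then have "(\<Union>i\<in>I. underS (a i)) \<noteq> Field r"
    using assms(1) by blast
  ultimately show ?thesis
    by blast
qed

lemma next_closure_point_least:
  assumes "closure_point r t d" "x \<in> underS d"
  shows "(next_closure_point r t x, d) \<in> r"
proof -
  have "{d. closure_point r t d \<and> x \<in> underS d} \<subseteq> Field r"
    by (auto simp: underS_def Field_def)
  then show ?thesis
    unfolding next_closure_point_def using minim_least assms by blast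
qed

lemma next_closure_point:
  assumes unbounded: "\<forall>x\<in>Field r. \<exists>d. closure_point r t d \<and> x \<in> underS d"
    and "x \<in> Field r"
  shows "closure_point r t (next_closure_point r t x) \<and> x \<in> underS (next_closure_point r t x)"
proof -
  let ?D = "{d. closure_point r t d \<and> x \<in> underS d}"
  have "?D \<subseteq> Field r"
    by (auto simp: underS_def Field_def)
  moreover have "?D \<noteq> {}"
    using assms by blast
  ultimately have "minim ?D \<in> ?D"
    by (rule minim_in)
  then show ?thesis
    unfolding next_closure_point_def by blast
qed

lemma next_closure_point_eq:
  assumes unbounded: "\<forall>x\<in>Field r. \<exists>d. closure_point r t d \<and> x \<in> underS d"
    and \<alpha>: "\<alpha> \<in> underS (t i \<beta>)" and \<beta>: "t i \<beta> \<in> underS (t j \<alpha>)"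
  shows "next_closure_point r t (t i \<beta>) = next_closure_point r t \<alpha>"
proof -
  let ?c = "next_closure_point r t"
  have c\<alpha>: "closure_point r t (?c \<alpha>)" "\<alpha> \<in> underS (?c \<alpha>)"
    using next_closure_point[OF unbounded subsetD[OF Order_Relation.underS_Field \<alpha>]] by blast+
  have c\<gamma>: "closure_point r t (?c (t i \<beta>))" "t i \<beta> \<in> underS (?c (t i \<beta>))"
    using next_closure_point[OF unbounded subsetD[OF Order_Relation.underS_Field \<beta>]] by blast+
  have "t j \<alpha> \<in> underS (?c \<alpha>)"
    using c\<alpha> unfolding closure_point_def by blast
  then have "t i \<beta> \<in> underS (?c \<alpha>)"
    by (rule underS_trans[OF \<beta>])
  then have "(?c (t i \<beta>), ?c \<alpha>) \<in> r"
    by (rule next_closure_point_least[OF c\<alpha>(1)])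
  moreover have "(?c \<alpha>, ?c (t i \<beta>)) \<in> r"
    by (rule next_closure_point_least[OF c\<gamma>(1) underS_trans[OF \<alpha> c\<gamma>(2)]])
  ultimately show ?thesis
    using antisymD[OF ANTISYM] by blast
qed

lemma next_closure_point_fibre:
  assumes unbounded: "\<forall>x\<in>Field r. \<exists>d. closure_point r t d \<and> x \<in> underS d"
  shows "{y \<in> Field r. next_closure_point r t y = next_closure_point r t x}
    \<subseteq> underS (next_closure_point r t x)"
  using next_closure_point[OF unbounded] by force

end

lemma cardSuc_images_bounded:
  fixes r :: "'a rel" and t :: "nat \<Rightarrow> 'a set \<Rightarrow> 'a set"
  assumes r: "Card_order r" "\<not> finite (Field r)"
    and t: "\<And>k. t k ` Field (cardSuc r) \<subseteq> Field (cardSuc r)"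
  shows "\<exists>d'\<in>Field (cardSuc r). \<forall>k. t k ` underS (cardSuc r) d \<subseteq> underS (cardSuc r) d'"
proof -
  define S where "S = (\<Union>k. t k ` underS (cardSuc r) d)"
  have "t k ` underS (cardSuc r) d \<subseteq> Field (cardSuc r)" for k
    using image_mono[OF Order_Relation.underS_Field] t by (rule subset_trans)
  then have "S \<subseteq> Field (cardSuc r)"
    unfolding S_def by (rule UN_least)
  moreover have "|t k ` underS (cardSuc r) d| \<le>o r" for k
    by (rule ordLeq_transitive[OF card_of_image card_of_underS_cardSuc[OF r(1)]])
  then have "|S| \<le>o r"
    unfolding S_def
    by (intro card_of_UNION_ordLeq_infinite_Field[OF r(2,1) card_of_UNIV_nat_ordLeq[OF r]] ballI)
  ultimately obtain d' where "d' \<in> Field (cardSuc r)" "S \<subseteq> underS (cardSuc r) d'"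
    using cardSuc_bounded[OF r] by blast
  then show ?thesis
    unfolding S_def UN_subset_iff by blast
qed

lemma cardSuc_closure_points_unbounded:
  assumes r: "Card_order r" "\<not> finite (Field r)"
    and t: "\<And>k. t k ` Field (cardSuc r) \<subseteq> Field (cardSuc r)"
  shows "\<forall>x\<in>Field (cardSuc r). \<exists>d. closure_point (cardSuc r) t d \<and> x \<in> underS (cardSuc r) d"
proof
  fix x assume x: "x \<in> Field (cardSuc r)"
  let ?W = "cardSuc r"
  interpret W: wo_rel ?W
    using cardSuc_Well_order[OF r(1)] by (rule wo_rel.intro)
  have "{x} \<subseteq> Field ?W"
    using x by blast
  moreover have "|{x}| \<le>o r"
    using Card_order_singl_ordLeq[OF r(1)] r(2) by (metis finite.emptyI)
  ultimately have "\<exists>d\<in>Field ?W. {x} \<subseteq> underS ?W d"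
    by (rule cardSuc_bounded[OF r])
  then obtain d\<^sub>0 where d\<^sub>0: "d\<^sub>0 \<in> Field ?W" "x \<in> underS ?W d\<^sub>0"
    by blast
  have "\<forall>d. \<exists>d'. d' \<in> Field ?W \<and> (\<forall>k. t k ` underS ?W d \<subseteq> underS ?W d')"
    using cardSuc_images_bounded[where t = t, OF r t] by blast
  then obtain step where step: "\<And>d. step d \<in> Field ?W" "\<And>d k. t k ` underS ?W d \<subseteq> underS ?W (step d)"
    by metis
  define D where "D n = (step ^^ n) d\<^sub>0" for n
  have D_step: "t k ` underS ?W (D n) \<subseteq> underS ?W (D (Suc n))" for k n
    unfolding D_def using step(2) by simp
  have "D n \<in> Field ?W" for n
    unfolding D_def using d\<^sub>0(1) step(1) by (cases n) simp_all
  then have "range D \<subseteq> Field ?W"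
    by blast
  then have "\<exists>b\<in>Field ?W. range D \<subseteq> underS ?W b"
    by (rule cardSuc_bounded[OF r _ ordLeq_transitive[OF card_of_image card_of_UNIV_nat_ordLeq[OF r]]])
  then obtain b where "b \<in> Field ?W" "range D \<subseteq> underS ?W b"
    by blast
  then obtain d where d: "(\<Union>n. underS ?W (D n)) = underS ?W d"
    by (blast dest: W.UN_underS_bounded)
  have "t k ` underS ?W d \<subseteq> underS ?W d" for k
    unfolding d[symmetric] image_UN
  proof (rule UN_least)
    fix n
    show "t k ` underS ?W (D n) \<subseteq> (\<Union>n. underS ?W (D n))"
      using D_step by blast
  qed
  moreover have "x \<in> underS ?W d"
    unfolding d[symmetric] using d\<^sub>0(2) by (intro UN_I[of 0]) (simp_all add: D_def)
  ultimately show "\<exists>d. closure_point ?W t d \<and> x \<in> underS ?W d"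
    unfolding closure_point_def by blast
qed

theorem lemma1:
  fixes r :: "'a rel"
    and t :: "nat \<Rightarrow> 'a set \<Rightarrow> 'a set"
  assumes "Card_order r"
    and "\<not> finite (Field r)"
    and "(BNF_Cardinal_Arithmetic.cexp r natLeq, r) \<in> ordIso"
    and "\<And>k. t k ` Field (cardSuc r) \<subseteq> Field (cardSuc r)"
  shows "\<exists>F. F ` Field (cardSuc r) \<subseteq> Field r \<and>
    (\<forall>\<alpha>\<in>Field (cardSuc r). \<forall>\<beta>\<in>Field (cardSuc r).
       \<alpha> \<noteq> \<beta> \<and> F \<alpha> = F \<beta> \<longrightarrow>
       \<not> (\<exists>i j. (\<alpha>, t i \<beta>) \<in> cardSuc r \<and> \<alpha> \<noteq> t i \<beta> \<and>
                    (t i \<beta>, t j \<alpha>) \<in> cardSuc r \<and> t i \<beta> \<noteq> t j \<alpha>))"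
proof -
  let ?W = "cardSuc r" and ?A = "Field (cardSuc r)"
  let ?c = "next_closure_point ?W t"
  interpret W: wo_rel ?W
    using cardSuc_Well_order[OF assms(1)] by (rule wo_rel.intro)
  have unbounded: "\<forall>x\<in>?A. \<exists>d. closure_point ?W t d \<and> x \<in> underS ?W d"
    by (rule cardSuc_closure_points_unbounded[where t = t, OF assms(1,2,4)])
  have fibres: "|{y \<in> ?A. ?c y = ?c x}| \<le>o r" for x
    using ordLeq_transitive[OF card_of_mono1[OF W.next_closure_point_fibre[OF unbounded]]
        card_of_underS_cardSuc[OF assms(1)]] .
  have image: "|?c ` ?A| \<le>o |Pow (Field r)|"
    using ordLeq_transitive[OF card_of_image card_of_Field_cardSuc_ordLeq_Pow[OF assms(1)]] .
  obtain F where F: "F ` ?A \<subseteq> Field r" and separating: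
      "\<forall>\<alpha>\<in>?A. \<forall>\<beta>\<in>?A. \<alpha> \<noteq> \<beta> \<and> F \<alpha> = F \<beta> \<longrightarrow> (\<forall>i. ?c (t i \<beta>) \<noteq> ?c \<alpha>)"
    using exists_coloring_separating_fibres[where A = ?A and c = ?c and t = t,
        OF assms(1,2) ordIso_imp_ordLeq[OF assms(3)] fibres image assms(4)] by blast
  show ?thesis
  proof (intro exI[of _ F] conjI F ballI impI notI)
    fix \<alpha> \<beta> assume "\<alpha> \<in> ?A" "\<beta> \<in> ?A" "\<alpha> \<noteq> \<beta> \<and> F \<alpha> = F \<beta>"
      and "\<exists>i j. (\<alpha>, t i \<beta>) \<in> ?W \<and> \<alpha> \<noteq> t i \<beta> \<and> (t i \<beta>, t j \<alpha>) \<in> ?W \<and> t i \<beta> \<noteq> t j \<alpha>"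
    then obtain i j where "\<alpha> \<in> underS ?W (t i \<beta>)" "t i \<beta> \<in> underS ?W (t j \<alpha>)"
      unfolding underS_def by blast
    then have "?c (t i \<beta>) = ?c \<alpha>"
      by (rule W.next_closure_point_eq[where t = t, OF unbounded])
    then show False
      using separating \<open>\<alpha> \<in> ?A\<close> \<open>\<beta> \<in> ?A\<close> \<open>\<alpha> \<noteq> \<beta> \<and> F \<alpha> = F \<beta>\<close> by blast
  qed
qed

end
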